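(* For every $k\ge1$ and every $n\ge1$, the families $\mathrm{SLT}_k$ and $\mathrm{RL}_n^P$ are incomparable (neither is contained in the other).
   Context: Strictly locally testable languages: let $V$ be an alphabet and $k\ge1$. For $B,I,E\subseteq V^k$ and $F\subseteq V^{\le k-1}$, $\mathrm{slt}(B,I,E,F)$ is the language over $V$ consisting of all words in $F$ together with all words $a_1\cdots a_n$ ($a_i\in V$, $n\ge k$) with $a_1\cdots a_k\in B$, $a_{j+1}\cdots a_{j+k}\in I$ for all $1\le j\le n-k-1$, and $a_{n-k+1}\cdots a_n\in E$. $\mathrm{SLT}_k$ is the family of languages of this form. A right-linear grammar is $G=(N,T,P,S)$ with rules $A\to wB$ or $A\to w$ ($A,B\in N$, $w\in T^*$). For a regular language $L$, $\mathrm{Prod}_{RL}(L)$ is the minimum of $|P|$ over all right-linear grammars generating $L$; $\mathrm{RL}_n^P=\{L\text{ regular}:\mathrm{Prod}_{RL}(L)\le n\}$. *)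

theory Defs
  imports Main
begin

type_synonym word = "nat list"
type_synonym lang = "word set"

text \<open>Strictly locally testable language slt(B,I,E,F) over alphabet V with window length k.
Positions are 0-based: the factor a_{j+1}..a_{j+k} is take k (drop j w).\<close>

definition slt :: "nat set \<Rightarrow> nat \<Rightarrow> word set \<Rightarrow> word set \<Rightarrow> word set \<Rightarrow> word set \<Rightarrow> lang" where
  "slt V k B I E F = F \<union>
     {w. set w \<subseteq> V \<and> length w \<ge> k \<and> take k w \<in> B
         \<and> (\<forall>j. 1 \<le> j \<and> j \<le> length w - k - 1 \<longrightarrow> take k (drop j w) \<in> I)
         \<and> drop (length w - k) w \<in> E}"

definition SLT :: "nat \<Rightarrow> lang set" where
  "SLT k = {L. \<exists>V B I E F. finite V
        \<and> B \<subseteq> {w. set w \<subseteq> V \<and> length w = k}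
        \<and> I \<subseteq> {w. set w \<subseteq> V \<and> length w = k}
        \<and> E \<subseteq> {w. set w \<subseteq> V \<and> length w = k}
        \<and> F \<subseteq> {w. set w \<subseteq> V \<and> length w \<le> k - 1}
        \<and> L = slt V k B I E F}"

text \<open>Right-linear grammars G = (N,T,P,S). Nonterminals are natural numbers.
A rule (A, w, Some B) stands for A \<rightarrow> wB, a rule (A, w, None) for A \<rightarrow> w.\<close>

type_synonym rule = "nat \<times> word \<times> nat option"

record rlgrammar =
  nonterms :: "nat set"
  terms :: "nat set"
  prods :: "rule set"
  start :: nat

definition rl_wf :: "rlgrammar \<Rightarrow> bool" where
  "rl_wf G \<longleftrightarrow> finite (nonterms G) \<and> finite (terms G) \<and> finite (prods G)
     \<and> start G \<in> nonterms G
     \<and> (\<forall>(A, w, r) \<in> prods G. A \<in> nonterms G \<and> set w \<subseteq> terms G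
           \<and> (\<forall>B. r = Some B \<longrightarrow> B \<in> nonterms G))"

inductive derives :: "rule set \<Rightarrow> nat \<Rightarrow> word \<Rightarrow> bool" for P where
  term_rule: "(A, w, None) \<in> P \<Longrightarrow> derives P A w"
| cont_rule: "(A, u, Some B) \<in> P \<Longrightarrow> derives P B v \<Longrightarrow> derives P A (u @ v)"

definition rl_lang :: "rlgrammar \<Rightarrow> lang" where
  "rl_lang G = {w. derives (prods G) (start G) w}"

definition regular :: "lang \<Rightarrow> bool" where
  "regular L \<longleftrightarrow> (\<exists>G. rl_wf G \<and> rl_lang G = L)"

definition Prod_RL :: "lang \<Rightarrow> nat" where
  "Prod_RL L = (LEAST m. \<exists>G. rl_wf G \<and> rl_lang G = L \<and> card (prods G) = m)"

definition RL_P :: "nat \<Rightarrow> lang set" where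
  "RL_P n = {L. regular L \<and> Prod_RL L \<le> n}"

end

theory Submission
  imports Defs
begin

text \<open>A right-linear grammar needs a separate production for every letter \<open>a\<close> for which
it generates a word over \<open>{a}\<close>, since the right-hand side producing an occurrence of \<open>a\<close>
is a factor of that word. With \<open>n + 1\<close> letters the constant words \<open>a\<^sup>k\<close> form a language
in \<open>SLT\<^sub>k\<close> outside \<open>RL\<^sub>n\<^sup>P\<close>. Conversely, a language in \<open>SLT\<^sub>k\<close> containing \<open>a\<^sup>m\<close> with
\<open>m \<ge> k\<close> also contains \<open>a\<^sup>k\<close>, because \<open>a\<^sup>k\<close> has the same prefix and suffix of length \<open>k\<close> and
no interior factors; so the one-production language \<open>{0\<^sup>k\<^sup>+\<^sup>1}\<close> is not in \<open>SLT\<^sub>k\<close>.\<close>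

lemma derives_letter_from_rule:
  assumes "derives P A w" "a \<in> set w"
  shows "\<exists>B u r x y. (B, u, r) \<in> P \<and> a \<in> set u \<and> w = x @ u @ y"
  using assms
proof (induction rule: derives.induct)
  case (term_rule A w)
  then show ?case by (metis append_Nil append_Nil2)
next
  case (cont_rule A u B v)
  show ?case
  proof (cases "a \<in> set u")
    case True
    then show ?thesis using cont_rule(1) by (metis append_Nil)
  next
    case False
    with cont_rule obtain B' u' r x y where "(B', u', r) \<in> P" "a \<in> set u'" "v = x @ u' @ y"
      by auto
    then show ?thesis by (metis append.assoc)
  qed
qed

lemma Prod_RL_attained:
  assumes "regular L"
  obtains G where "rl_wf G" "rl_lang G = L" "card (prods G) = Prod_RL L"
proof -
  from assms have "\<exists>m G. rl_wf G \<and> rl_lang G = L \<and> card (prods G) = m"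
    unfolding regular_def by blast
  from LeastI_ex[OF this] show ?thesis
    using that unfolding Prod_RL_def by blast
qed

lemma Prod_RL_le_card_prods:
  assumes "rl_wf G"
  shows "Prod_RL (rl_lang G) \<le> card (prods G)"
  unfolding Prod_RL_def by (rule Least_le) (use assms in blast)

lemma card_letters_le_Prod_RL:
  assumes "regular L" and unary: "\<And>a. a \<in> A \<Longrightarrow> \<exists>w \<in> L. set w = {a}"
  shows "card A \<le> Prod_RL L"
proof -
  obtain G where wf: "rl_wf G" and lang: "rl_lang G = L" and min: "card (prods G) = Prod_RL L"
    using Prod_RL_attained[OF \<open>regular L\<close>] .
  define letter :: "rule \<Rightarrow> nat" where "letter r = the_elem (set (fst (snd r)))" for r
  have "A \<subseteq> letter ` prods G"
  proof
    fix a assume "a \<in> A"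
    then obtain w where "derives (prods G) (start G) w" "set w = {a}"
      using unary lang by (auto simp: rl_lang_def)
    then obtain B u r x y where rule: "(B, u, r) \<in> prods G" "a \<in> set u" "w = x @ u @ y"
      using derives_letter_from_rule by blast
    then have "set u = {a}" using \<open>set w = {a}\<close> by auto
    then have "letter (B, u, r) = a" by (simp add: letter_def)
    then show "a \<in> letter ` prods G"
      using rule(1) by force
  qed
  moreover have "finite (prods G)" using wf by (simp add: rl_wf_def)
  ultimately have "card A \<le> card (letter ` prods G)"
    by (simp add: card_mono)
  also have "\<dots> \<le> card (prods G)"
    by (rule card_image_le) fact
  finally show ?thesis using min by simp
qed

lemma singleton_in_RL_P:
  assumes "n \<ge> 1"
  shows "{w} \<in> RL_P n"
proof -
  define G where "G = \<lparr>nonterms = {0}, terms = set w, prods = {(0, w, None)}, start = 0\<rparr>"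
  have wf: "rl_wf G" by (auto simp: rl_wf_def G_def)
  have "derives {(0, w, None)} A v \<Longrightarrow> v = w" for A v
    by (induction rule: derives.induct) auto
  then have lang: "rl_lang G = {w}"
    by (auto simp: rl_lang_def G_def intro: derives.term_rule)
  have "Prod_RL {w} \<le> 1"
    using Prod_RL_le_card_prods[OF wf] unfolding lang by (simp add: G_def)
  then show ?thesis
    using wf lang assms by (auto simp: RL_P_def regular_def)
qed

lemma constant_words_in_SLT:
  assumes "finite V"
  shows "\<exists>L \<in> SLT k. \<forall>a \<in> V. replicate k a \<in> L"
proof -
  define B where "B = {replicate k a | a. a \<in> V}"
  have "slt V k B {} B {} \<in> SLT k"
    unfolding SLT_def using assms
    by (intro CollectI exI[of _ V] exI[of _ B] exI[of _ "{}"] exI[of _ B] exI[of _ "{}"])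
      (auto simp: B_def)
  moreover have "\<forall>a \<in> V. replicate k a \<in> slt V k B {} B {}"
    by (auto simp: slt_def B_def)
  ultimately show ?thesis by blast
qed

lemma SLT_replicate_shorten:
  assumes "L \<in> SLT k" "k \<le> m" "replicate m a \<in> L"
  shows "replicate k a \<in> L"
proof -
  obtain V B I E F where F: "F \<subseteq> {w. set w \<subseteq> V \<and> length w \<le> k - 1}"
    and L: "L = slt V k B I E F"
    using assms(1) unfolding SLT_def by blast
  show ?thesis
  proof (cases "replicate m a \<in> F")
    case True
    with F assms(2) have "m = k" by auto
    with assms(3) show ?thesis by simp
  next
    case False
    with assms(2,3) have "set (replicate m a) \<subseteq> V" "replicate k a \<in> B" "replicate k a \<in> E"
      by (auto simp: L slt_def min_absorb2)
    then show ?thesis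
      using assms(2) by (auto simp: L slt_def split: if_splits)
  qed
qed

theorem mainTheorem10:
  fixes k n :: nat
  assumes "k \<ge> 1" and "n \<ge> 1"
  shows "\<not> SLT k \<subseteq> RL_P n \<and> \<not> RL_P n \<subseteq> SLT k"
proof
  obtain L where L: "L \<in> SLT k" "\<forall>a \<in> {0..n}. replicate k a \<in> L"
    using constant_words_in_SLT[of "{0..n}"] by auto
  have "L \<notin> RL_P n"
  proof
    assume "L \<in> RL_P n"
    moreover have "\<exists>w \<in> L. set w = {a}" if "a \<in> {0..n}" for a
      using L(2) that assms(1) by force
    ultimately have "card {0..n} \<le> Prod_RL L" "Prod_RL L \<le> n"
      using card_letters_le_Prod_RL unfolding RL_P_def by blast+
    then show False by simp
  qed
  with L(1) show "\<not> SLT k \<subseteq> RL_P n" by blast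
next
  have "{replicate (Suc k) (0::nat)} \<notin> SLT k"
  proof
    assume "{replicate (Suc k) 0} \<in> SLT k"
    from SLT_replicate_shorten[OF this _ singletonI]
    have "replicate k 0 \<in> {replicate (Suc k) (0::nat)}" by simp
    then show False by simp
  qed
  with singleton_in_RL_P[OF assms(2)] show "\<not> RL_P n \<subseteq> SLT k" by blast
qed

end
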